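(* Let $k\ge 2$. There exist hypercube deliberation spaces with arbitrarily large numbers $n$ of agents in which a deliberation may take $\Omega(2^{\sqrt{n}/2})$ $k$-compromise transitions. That is, there are a constant $c>0$ and, for arbitrarily large $n$, a hypercube deliberation space with $n$ agents, an initial coalition structure, and a sequence of at least $c\,2^{\sqrt{n}/2}$ consecutive $k$-compromise transitions starting from that structure.
   Context: A hypercube deliberation space of dimension $d$ consists of the proposal set $\{0,1\}^d$, a finite multiset of $n$ agents, each a point of $\{0,1\}^d$, and the Hamming distance $\rho$; the status quo is $\mathbf{0}$. An agent $v$ supports a proposal $p$ if $\rho(v,p)<\rho(v,\mathbf{0})$. A coalition is a pair $(C,p)$ where $C$ is a set of agents and $p$ is a proposal supported by all agents of $C$. A coalition structure is a partition of the agents into coalitions. A $k$-compromise transition from a coalition structure is the following move. Take at most $k$ of its coalitions $(C_1,p_1),\dots,(C_\ell,p_\ell)$ with $\ell\le k$, a set $S\subseteq C_1\cup\dots\cup C_\ell$ meeting each $C_i$, and a proposal $p$ supported by all agents of $S$ with $|S|>|C_i|$ for every $i$. The agents of $S$ leave their coalitions and form the coalition $(S,p)$. A deliberation is a sequence of such transitions. *)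

theory Defs
  imports Complex_Main
begin

text \<open>Hypercube deliberation space of dimension d: points of {0,1}^d are encoded
  as subsets of {0..<d} (the set of coordinates equal to 1); the status quo 0 is {}.
  The n agents (a multiset of points) are indexed by {0..<n} with positions pos i.\<close>

definition hamming :: "nat set \<Rightarrow> nat set \<Rightarrow> nat" where
  "hamming a b = card ((a - b) \<union> (b - a))"

definition is_point :: "nat \<Rightarrow> nat set \<Rightarrow> bool" where
  "is_point d p \<longleftrightarrow> p \<subseteq> {..<d}"

definition supports :: "nat set \<Rightarrow> nat set \<Rightarrow> bool" where
  "supports v p \<longleftrightarrow> hamming v p < hamming v {}"

definition is_coalition :: "nat \<Rightarrow> (nat \<Rightarrow> nat set) \<Rightarrow> nat set \<times> nat set \<Rightarrow> bool" where
  "is_coalition d pos Cp \<longleftrightarrow> is_point d (snd Cp) \<and> (\<forall>i\<in>fst Cp. supports (pos i) (snd Cp))"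

definition coalition_structure ::
  "nat \<Rightarrow> nat \<Rightarrow> (nat \<Rightarrow> nat set) \<Rightarrow> (nat set \<times> nat set) set \<Rightarrow> bool" where
  "coalition_structure d n pos D \<longleftrightarrow>
     (\<forall>Cp\<in>D. is_coalition d pos Cp \<and> fst Cp \<noteq> {}) \<and>
     (\<forall>Cp\<in>D. \<forall>Cq\<in>D. Cp \<noteq> Cq \<longrightarrow> fst Cp \<inter> fst Cq = {}) \<and>
     (\<Union>Cp\<in>D. fst Cp) = {..<n}"

definition compromise_transition ::
  "nat \<Rightarrow> nat \<Rightarrow> (nat \<Rightarrow> nat set) \<Rightarrow> nat \<Rightarrow>
   (nat set \<times> nat set) set \<Rightarrow> (nat set \<times> nat set) set \<Rightarrow> bool" where
  "compromise_transition d n pos k D D' \<longleftrightarrow>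
     (\<exists>T S p. T \<subseteq> D \<and> T \<noteq> {} \<and> card T \<le> k \<and>
        S \<subseteq> (\<Union>Cp\<in>T. fst Cp) \<and> (\<forall>Cp\<in>T. S \<inter> fst Cp \<noteq> {}) \<and>
        is_point d p \<and> (\<forall>i\<in>S. supports (pos i) p) \<and>
        (\<forall>Cp\<in>T. card S > card (fst Cp)) \<and>
        D' = {(fst Cp - S, snd Cp) | Cp. Cp \<in> D \<and> fst Cp - S \<noteq> {}} \<union> {(S, p)})"

end

theory Submission
  imports Defs "HOL-Library.Multiset" "HOL-Library.Disjoint_Sets"
begin

(* Put all n agents on the same vertex {0} of the 1-cube, so that every coalition can back the
   proposal {0} and a deliberation only sees the multiset of coalition sizes.  Compromises of
   two coalitions then suffice to run a binary counter whose t bits are coalitions of at most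
   2t + 1 agents, fuelled by t singletons.  Counting from 0 to 2^t - 1 takes 2^t - 1
   transitions, and since n = t (t + 2) < (t + 1)^2 this is at least 2^(sqrt n / 2) / 2. *)

(* Two coalitions of sizes x + u and y + v compromise on a coalition taking x and y of their
   agents; it is larger than both exactly when u < y and v < x. *)
inductive size_step :: "nat multiset \<Rightarrow> nat multiset \<Rightarrow> bool" where
  compromise: "v < x \<Longrightarrow> u < y \<Longrightarrow>
   size_step (N + {#x + u, y + v#}) (N + {#x + y#} + filter_mset (\<lambda>s. s \<noteq> 0) {#u, v#})"

lemma size_step_merge:
  "0 < x \<Longrightarrow> 0 < y \<Longrightarrow> size_step (N + {#x, y#}) (N + {#x + y#})"
  using size_step.compromise[of 0 x 0 y N] by simp

lemma size_step_split:
  "0 < u \<Longrightarrow> 0 < v \<Longrightarrow> v < x \<Longrightarrow> u < y \<Longrightarrow>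
   size_step (N + {#x + u, y + v#}) (N + {#x + y, u, v#})"
  using size_step.compromise[of v x u y N] by (simp add: add_mset_commute)

lemma size_step_frame: "size_step M M' \<Longrightarrow> size_step (C + M) (C + M')"
proof (induction rule: size_step.induct)
  case (compromise v x u y N)
  then show ?case using size_step.compromise[of v x u y "C + N"] by (simp add: add.assoc)
qed

definition reaches_ge :: "nat multiset \<Rightarrow> nat multiset \<Rightarrow> nat \<Rightarrow> bool" where
  "reaches_ge M M' m \<longleftrightarrow> (\<exists>m'\<ge>m. (size_step ^^ m') M M')"

lemma reaches_ge_refl: "reaches_ge M M 0"
  unfolding reaches_ge_def by (auto intro!: exI[of _ 0])

lemma reaches_ge_step: "size_step M M' \<Longrightarrow> reaches_ge M M' 1"
  unfolding reaches_ge_def by (auto intro!: exI[of _ 1])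

lemma reaches_ge_mono: "reaches_ge M M' m \<Longrightarrow> m' \<le> m \<Longrightarrow> reaches_ge M M' m'"
  unfolding reaches_ge_def by (meson order_trans)

lemma reaches_ge_trans:
  assumes "reaches_ge M1 M2 a" "reaches_ge M2 M3 b"
  shows "reaches_ge M1 M3 (a + b)"
proof -
  obtain a' b' where "a \<le> a'" "(size_step ^^ a') M1 M2" "b \<le> b'" "(size_step ^^ b') M2 M3"
    using assms unfolding reaches_ge_def by blast
  then have "(size_step ^^ (a' + b')) M1 M3" by (metis relcomppI relpowp_add)
  with \<open>a \<le> a'\<close> \<open>b \<le> b'\<close> show ?thesis
    unfolding reaches_ge_def by (auto intro: exI[of _ "a' + b'"])
qed

lemma reaches_ge_frame:
  assumes "reaches_ge M M' m"
  shows "reaches_ge (C + M) (C + M') m"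
proof -
  have "(size_step ^^ i) (C + M) (C + M')" if "(size_step ^^ i) M M'" for i M'
    using that
  proof (induction i arbitrary: M')
    case (Suc i)
    then show ?case by (auto intro: relpowp_Suc_I size_step_frame)
  qed simp
  with assms show ?thesis unfolding reaches_ge_def by blast
qed

abbreviation singletons :: "nat \<Rightarrow> nat multiset" where
  "singletons j \<equiv> replicate_mset j 1"

lemma replicate_mset_add: "replicate_mset (a + b) x = replicate_mset a x + replicate_mset b x"
  by (induction a) auto

(* Counter states: bit p is a coalition of size 2p + 2 when clear and 2p + 3 when set. *)
definition all_zeros :: "nat \<Rightarrow> nat multiset" where
  "all_zeros k = mset (map (\<lambda>p. 2 * p + 2) [0..<k])"

definition all_ones :: "nat \<Rightarrow> nat multiset" where
  "all_ones k = mset (map (\<lambda>p. 2 * p + 3) [0..<k])"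

lemma all_zeros_Suc: "all_zeros (Suc k) = add_mset (2 * k + 2) (all_zeros k)"
  by (simp add: all_zeros_def)

lemma all_ones_Suc: "all_ones (Suc k) = add_mset (2 * k + 3) (all_ones k)"
  by (simp add: all_ones_def)

lemma merge_singletons: "0 < x \<Longrightarrow> reaches_ge (singletons x) {#x#} 0"
proof (induction x rule: nat_induct_non_zero)
  case 1
  then show ?case by (simp add: reaches_ge_refl)
next
  case (Suc x)
  have "reaches_ge (singletons (Suc x)) {#x, 1#} 0"
    using reaches_ge_frame[OF Suc.IH, of "{#1#}"] by (simp add: add.commute add_mset_commute)
  moreover have "size_step {#x, 1#} {#Suc x#}"
    using size_step_merge[of x 1 "{#}"] Suc.hyps by simp
  ultimately show ?case by (meson reaches_ge_trans reaches_ge_step reaches_ge_mono le0)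
qed

lemma build_all_zeros: "reaches_ge (singletons (k * (k + 1))) (all_zeros k) 0"
proof (induction k)
  case 0
  then show ?case by (simp add: all_zeros_def reaches_ge_refl)
next
  case (Suc k)
  have "Suc k * (Suc k + 1) = (2 * k + 2) + k * (k + 1)"
    by (simp add: algebra_simps)
  then have sizes: "singletons (Suc k * (Suc k + 1)) = singletons (2 * k + 2) + singletons (k * (k + 1))"
    by (simp only: replicate_mset_add)
  have "reaches_ge (singletons (2 * k + 2) + singletons (k * (k + 1)))
      (singletons (2 * k + 2) + all_zeros k) 0"
    by (rule reaches_ge_frame[OF Suc.IH])
  then have low: "reaches_ge (singletons (2 * k + 2) + singletons (k * (k + 1)))
      (all_zeros k + singletons (2 * k + 2)) 0"
    by (simp only: add.commute[of "singletons (2 * k + 2)" "all_zeros k"])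
  have top: "reaches_ge (all_zeros k + singletons (2 * k + 2)) (all_zeros (Suc k)) 0"
    using reaches_ge_frame[OF merge_singletons, of "2 * k + 2" "all_zeros k"] by (simp add: all_zeros_Suc)
  show ?case
    unfolding sizes using reaches_ge_trans[OF low top] by simp
qed

(* The coalition of size c + 1 takes two agents from the highest set bit below it and drops
   one; the rest of that bit carries on downwards, and the final merge uses up the spare
   singleton. *)
lemma carry:
  "2 * j \<le> c \<Longrightarrow>
   reaches_ge (add_mset (Suc c) (add_mset 1 (all_ones j))) (add_mset (c + 2) (all_zeros j + singletons j)) 1"
proof (induction j arbitrary: c)
  case 0
  have "size_step {#Suc c, 1#} {#c + 2#}" using size_step_merge[of "Suc c" 1 "{#}"] by simp
  then have "reaches_ge {#Suc c, 1#} {#c + 2#} 1" by (rule reaches_ge_step)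
  then show ?case by (simp add: all_ones_def all_zeros_def)
next
  case (Suc j)
  let ?N = "add_mset 1 (all_ones j)"
  have "size_step (?N + {#c + 1, 2 + (2 * j + 1)#}) (?N + {#c + 2, 1, 2 * j + 1#})"
    using Suc.prems by (intro size_step_split) auto
  moreover have "?N + {#c + 1, 2 + (2 * j + 1)#} = add_mset (Suc c) (add_mset 1 (all_ones (Suc j)))"
    by (simp add: all_ones_Suc multiset_eq_iff)
  moreover have "?N + {#c + 2, 1, 2 * j + 1#} = {#c + 2, 1#} + add_mset (Suc (2 * j)) ?N"
    by (simp add: multiset_eq_iff)
  ultimately have first_split: "reaches_ge (add_mset (Suc c) (add_mset 1 (all_ones (Suc j))))
      ({#c + 2, 1#} + add_mset (Suc (2 * j)) ?N) 1"
    using reaches_ge_step by metis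
  have rest: "reaches_ge ({#c + 2, 1#} + add_mset (Suc (2 * j)) ?N)
      ({#c + 2, 1#} + add_mset (2 * j + 2) (all_zeros j + singletons j)) 1"
    by (rule reaches_ge_frame[OF Suc.IH]) simp
  have eq: "{#c + 2, 1#} + add_mset (2 * j + 2) (all_zeros j + singletons j) =
      add_mset (c + 2) (all_zeros (Suc j) + singletons (Suc j))"
    by (simp add: all_zeros_Suc multiset_eq_iff)
  show ?case
    by (rule reaches_ge_mono[OF reaches_ge_trans[OF first_split rest[unfolded eq]]]) simp
qed

lemma count_up: "reaches_ge (all_zeros k + singletons k) (all_ones k) (2 ^ k - 1)"
proof (induction k)
  case 0
  then show ?case by (simp add: all_zeros_def all_ones_def reaches_ge_refl)
next
  case (Suc k)
  let ?Z = "all_zeros k + singletons k"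
  have low: "reaches_ge ({#2 * k + 2, 1#} + ?Z) ({#2 * k + 2, 1#} + all_ones k) (2 ^ k - 1)"
    by (rule reaches_ge_frame[OF Suc.IH])
  have from_low: "add_mset (Suc (2 * k + 1)) (add_mset 1 (all_ones k)) = {#2 * k + 2, 1#} + all_ones k"
    by simp
  have to_high: "add_mset (2 * k + 1 + 2) ?Z = {#2 * k + 3#} + ?Z"
    by simp
  have carry_top: "reaches_ge ({#2 * k + 2, 1#} + all_ones k) ({#2 * k + 3#} + ?Z) 1"
    by (rule carry[of k "2 * k + 1", unfolded from_low to_high]) simp
  have high: "reaches_ge ({#2 * k + 3#} + ?Z) ({#2 * k + 3#} + all_ones k) (2 ^ k - 1)"
    by (rule reaches_ge_frame[OF Suc.IH])
  have start: "{#2 * k + 2, 1#} + ?Z = all_zeros (Suc k) + singletons (Suc k)"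
    by (simp add: all_zeros_Suc multiset_eq_iff)
  have finish: "{#2 * k + 3#} + all_ones k = all_ones (Suc k)"
    by (simp add: all_ones_Suc)
  have steps: "2 ^ Suc k - 1 \<le> (2 ^ k - 1) + 1 + (2 ^ k - 1 :: nat)"
    using one_le_power[of "2::nat" k] by simp
  show ?case
    using reaches_ge_mono[OF reaches_ge_trans[OF reaches_ge_trans[OF low carry_top] high] steps]
    unfolding start finish .
qed

definition carve_out :: "'a set \<Rightarrow> 'a set set \<Rightarrow> 'a set set" where
  "carve_out S P = insert S ((\<lambda>X. X - S) ` P - {{}})"

lemma partition_on_carve_out:
  assumes "partition_on I P" "S \<subseteq> I" "S \<noteq> {}"
  shows "partition_on I (carve_out S P)"
proof -
  have "partition_on (I - S) ((\<lambda>X. X - S) ` P - {{}})"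
    by (rule partition_on_transform[OF assms(1)]) (auto simp: disjnt_def)
  then show ?thesis
    unfolding carve_out_def using assms(2,3) by (subst partition_on_insert) (auto simp: disjnt_def)
qed

definition block_sizes :: "'a set set \<Rightarrow> nat multiset" where
  "block_sizes P = image_mset card (mset_set P)"

lemma block_sizes_remove:
  assumes "finite P" "a \<in># block_sizes P"
  obtains A where "A \<in> P" "card A = a" "block_sizes P = add_mset a (block_sizes (P - {A}))"
proof -
  obtain A where A: "A \<in> P" "card A = a"
    using assms unfolding block_sizes_def by auto
  moreover have "block_sizes P = add_mset a (block_sizes (P - {A}))"
    unfolding block_sizes_def using mset_set.remove[OF assms(1) A(1)] A(2) by simp
  ultimately show thesis by (rule that)
qed

lemma block_sizes_remove_pair:
  assumes "finite P" "block_sizes P = N + {#a, b#}"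
  obtains A B where "A \<in> P" "B \<in> P" "A \<noteq> B" "card A = a" "card B = b" "block_sizes (P - {A, B}) = N"
proof -
  obtain A where A: "A \<in> P" "card A = a" "block_sizes P = add_mset a (block_sizes (P - {A}))"
    using block_sizes_remove[OF assms(1), of a] assms(2) by auto
  then have "block_sizes (P - {A}) = add_mset b N"
    using assms(2) by simp
  then obtain B where B: "B \<in> P - {A}" "card B = b"
    "block_sizes (P - {A}) = add_mset b (block_sizes (P - {A} - {B}))"
    using block_sizes_remove[of "P - {A}" b] assms(1) by auto
  have "block_sizes (P - {A, B}) = N"
    using B(3) \<open>block_sizes (P - {A}) = add_mset b N\<close> by (simp add: Diff_insert2[symmetric])
  with A B show thesis using that by blast
qed

lemma block_sizes_carve_out:
  assumes P: "partition_on I P" and "finite I" "S \<noteq> {}"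
  shows "block_sizes (carve_out S P) =
    add_mset (card S) (filter_mset (\<lambda>s. s \<noteq> 0) (image_mset (\<lambda>X. card (X - S)) (mset_set P)))"
proof -
  let ?Q = "{X \<in> P. X - S \<noteq> {}}"
  have "finite P" using finite_elements[OF \<open>finite I\<close> P] .
  have fin_blocks: "finite X" if "X \<in> P" for X
    using that partition_onD1[OF P] \<open>finite I\<close> by (metis Union_upper rev_finite_subset)
  have "inj_on (\<lambda>X. X - S) ?Q"
    using partition_onD2[OF P] by (auto simp: inj_on_def disjoint_def)
  moreover have "(\<lambda>X. X - S) ` P - {{}} = (\<lambda>X. X - S) ` ?Q"
    by auto
  ultimately have pieces: "mset_set ((\<lambda>X. X - S) ` P - {{}}) =
      image_mset (\<lambda>X. X - S) (filter_mset (\<lambda>X. X - S \<noteq> {}) (mset_set P))"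
    using \<open>finite P\<close> by (simp add: image_mset_mset_set)
  have "S \<notin> (\<lambda>X. X - S) ` P - {{}}"
    using \<open>S \<noteq> {}\<close> by auto
  then have "mset_set (carve_out S P) = add_mset S (mset_set ((\<lambda>X. X - S) ` P - {{}}))"
    unfolding carve_out_def using \<open>finite P\<close> by (simp add: mset_set.insert)
  moreover have "filter_mset (\<lambda>X. card (X - S) \<noteq> 0) (mset_set P) = filter_mset (\<lambda>X. X - S \<noteq> {}) (mset_set P)"
    using fin_blocks \<open>finite P\<close> by (intro filter_mset_cong) auto
  ultimately show ?thesis
    unfolding block_sizes_def pieces by (simp add: filter_mset_image_mset multiset.map_comp comp_def)
qed

lemma block_sizes_carve_out_two:
  assumes P: "partition_on I P" "finite I"
    and AB: "A \<in> P" "B \<in> P" "A \<noteq> B" and UV: "U \<subseteq> A" "V \<subseteq> B"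
    and S: "S = (A - U) \<union> (B - V)" "S \<noteq> {}"
  shows "block_sizes (carve_out S P) =
    add_mset (card S) (block_sizes (P - {A, B}) + filter_mset (\<lambda>s. s \<noteq> 0) {#card U, card V#})"
proof -
  have "finite P" using finite_elements[OF P(2,1)] .
  have disj: "X \<inter> Y = {}" if "X \<in> P" "Y \<in> P" "X \<noteq> Y" for X Y
    using partition_onD2[OF P(1)] that by (auto simp: disjoint_def)
  have nonzero: "card X \<noteq> 0" if "X \<in> P" for X
  proof -
    have "finite X"
      using that partition_onD1[OF P(1)] P(2) by (metis Union_upper rev_finite_subset)
    moreover have "X \<noteq> {}"
      using that partition_onD3[OF P(1)] by blast
    ultimately show ?thesis by simp
  qed
  have "X - S = X" if "X \<in> P - {A, B}" for X
    using that S(1) disj[of X A] disj[of X B] AB by blast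
  then have "image_mset (\<lambda>X. card (X - S)) (mset_set (P - {A, B})) = block_sizes (P - {A, B})"
    unfolding block_sizes_def using \<open>finite P\<close> by (intro image_mset_cong) simp
  moreover have "filter_mset (\<lambda>s. s \<noteq> 0) (block_sizes (P - {A, B})) =
      filter_mset (\<lambda>_. True) (block_sizes (P - {A, B}))"
  proof (rule filter_mset_cong[OF refl])
    fix s assume "s \<in># block_sizes (P - {A, B})"
    then obtain X where "X \<in> P" "s = card X"
      using \<open>finite P\<close> by (auto simp: block_sizes_def)
    then show "s \<noteq> 0 \<longleftrightarrow> True" using nonzero by simp
  qed
  moreover have "A - S = U" "B - S = V"
    using UV S(1) disj[OF AB] by auto
  moreover have "mset_set P = add_mset A (add_mset B (mset_set (P - {A, B})))"
  proof -
    have "mset_set P = add_mset A (mset_set (P - {A}))"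
      using \<open>finite P\<close> AB(1) by (rule mset_set.remove)
    moreover have "mset_set (P - {A}) = add_mset B (mset_set (P - {A} - {B}))"
      using \<open>finite P\<close> AB by (intro mset_set.remove) auto
    moreover have "P - {A} - {B} = P - {A, B}" by blast
    ultimately show ?thesis by simp
  qed
  ultimately show ?thesis
    using block_sizes_carve_out[OF P S(2)] by (simp add: add_mset_commute)
qed

definition coalitions :: "nat set set \<Rightarrow> (nat set \<times> nat set) set" where
  "coalitions P = (\<lambda>C. (C, {0})) ` P"

lemma supports_singleton_self: "supports {i} {i}"
  unfolding supports_def hamming_def by simp

lemma coalition_structure_coalitions:
  "partition_on {..<n} P \<Longrightarrow> coalition_structure 1 n (\<lambda>_. {0}) (coalitions P)"
  unfolding coalition_structure_def is_coalition_def coalitions_def partition_on_def disjoint_def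
  by (auto simp: is_point_def supports_singleton_self)

lemma compromise_transition_carve_out:
  assumes AB: "A \<in> P" "B \<in> P" "A \<noteq> B" and S: "S \<subseteq> A \<union> B" "S \<inter> A \<noteq> {}" "S \<inter> B \<noteq> {}"
    and larger: "card A < card S" "card B < card S" and "2 \<le> k"
  shows "compromise_transition 1 n (\<lambda>_. {0}) k (coalitions P) (coalitions (carve_out S P))"
  unfolding compromise_transition_def
proof (intro exI conjI)
  show "coalitions {A, B} \<subseteq> coalitions P" "coalitions {A, B} \<noteq> {}"
    using AB by (auto simp: coalitions_def)
  show "card (coalitions {A, B}) \<le> k"
    using \<open>2 \<le> k\<close> \<open>A \<noteq> B\<close> by (simp add: coalitions_def)
  show "S \<subseteq> (\<Union>Cp\<in>coalitions {A, B}. fst Cp)"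
    using S(1) by (simp add: coalitions_def)
  show "\<forall>Cp\<in>coalitions {A, B}. S \<inter> fst Cp \<noteq> {}"
    using S(2,3) by (simp add: coalitions_def)
  show "\<forall>Cp\<in>coalitions {A, B}. card (fst Cp) < card S"
    using larger by (simp add: coalitions_def)
  show "is_point 1 {0}" "\<forall>i\<in>S. supports {0} {0}"
    by (simp_all add: is_point_def supports_singleton_self)
  have "{(fst Cp - S, snd Cp) | Cp. Cp \<in> coalitions P \<and> fst Cp - S \<noteq> {}} =
      coalitions ((\<lambda>X. X - S) ` P - {{}})"
  proof (intro equalityI subsetI)
    fix D assume "D \<in> {(fst Cp - S, snd Cp) | Cp. Cp \<in> coalitions P \<and> fst Cp - S \<noteq> {}}"
    then obtain X where "X \<in> P" "X - S \<noteq> {}" "D = (X - S, {0})"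
      by (auto simp: coalitions_def)
    then show "D \<in> coalitions ((\<lambda>X. X - S) ` P - {{}})"
      unfolding coalitions_def by blast
  next
    fix D assume "D \<in> coalitions ((\<lambda>X. X - S) ` P - {{}})"
    then obtain X where "X \<in> P" "X - S \<noteq> {}" "D = (X - S, {0})"
      by (auto simp: coalitions_def)
    then show "D \<in> {(fst Cp - S, snd Cp) | Cp. Cp \<in> coalitions P \<and> fst Cp - S \<noteq> {}}"
      unfolding coalitions_def by force
  qed
  then show "coalitions (carve_out S P) =
      {(fst Cp - S, snd Cp) | Cp. Cp \<in> coalitions P \<and> fst Cp - S \<noteq> {}} \<union> {(S, {0})}"
    by (simp add: carve_out_def coalitions_def)
qed

lemma size_step_realizable:
  assumes P: "partition_on {..<n} P" and step: "size_step (block_sizes P) M'" and "2 \<le> k"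
  obtains P' where "compromise_transition 1 n (\<lambda>_. {0}) k (coalitions P) (coalitions P')"
    "partition_on {..<n} P'" "block_sizes P' = M'"
  using step
proof cases
  case (compromise v x u y N)
  have "finite P" using finite_elements[OF _ P] by simp
  then obtain A B where A: "A \<in> P" "card A = x + u" and B: "B \<in> P" "card B = y + v"
    and "A \<noteq> B" and rest: "block_sizes (P - {A, B}) = N"
    using block_sizes_remove_pair compromise(1) by metis
  have "A \<subseteq> {..<n}" "B \<subseteq> {..<n}"
    using A(1) B(1) partition_onD1[OF P] by auto
  then have "finite A" "finite B" by (auto intro: finite_subset)
  have "A \<inter> B = {}"
    using partition_onD2[OF P] A(1) B(1) \<open>A \<noteq> B\<close> by (auto simp: disjoint_def)
  obtain U where U: "U \<subseteq> A" "card U = u"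
    using obtain_subset_with_card_n[of u A] A(2) by auto
  obtain V where V: "V \<subseteq> B" "card V = v"
    using obtain_subset_with_card_n[of v B] B(2) by auto
  define S where "S = (A - U) \<union> (B - V)"
  have "card (A - U) = x" "card (B - V) = y"
    using U V A(2) B(2) \<open>finite A\<close> \<open>finite B\<close> by (simp_all add: card_Diff_subset finite_subset)
  then have card_S: "card S = x + y"
    unfolding S_def using \<open>A \<inter> B = {}\<close> \<open>finite A\<close> \<open>finite B\<close> by (subst card_Un_disjoint) auto
  have "S \<inter> A = A - U" "S \<inter> B = B - V"
    unfolding S_def using U V \<open>A \<inter> B = {}\<close> by auto
  moreover have "A - U \<noteq> {}" "B - V \<noteq> {}"
    using \<open>card (A - U) = x\<close> \<open>card (B - V) = y\<close> compromise(3,4) by (metis card.empty not_less0)+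
  ultimately have meets: "S \<inter> A \<noteq> {}" "S \<inter> B \<noteq> {}" "S \<noteq> {}" by auto
  have "S \<subseteq> A \<union> B" unfolding S_def by blast
  show thesis
  proof (rule that)
    show "compromise_transition 1 n (\<lambda>_. {0}) k (coalitions P) (coalitions (carve_out S P))"
      using A(2) B(2) card_S compromise(3,4)
      by (intro compromise_transition_carve_out[OF A(1) B(1) \<open>A \<noteq> B\<close> \<open>S \<subseteq> A \<union> B\<close> meets(1,2)
            _ _ \<open>2 \<le> k\<close>]) simp_all
    show "partition_on {..<n} (carve_out S P)"
      using \<open>S \<subseteq> A \<union> B\<close> \<open>A \<subseteq> {..<n}\<close> \<open>B \<subseteq> {..<n}\<close>
      by (intro partition_on_carve_out[OF P _ meets(3)]) blast
    show "block_sizes (carve_out S P) = M'"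
      using block_sizes_carve_out_two[OF P _ A(1) B(1) \<open>A \<noteq> B\<close> U(1) V(1) S_def meets(3)]
        rest card_S U(2) V(2) compromise(2)
      by (simp add: add_mset_commute)
  qed
qed

lemma relpowp_simulation:
  assumes "(R ^^ m) x y" "I x u"
    and simulate: "\<And>x y u. R x y \<Longrightarrow> I x u \<Longrightarrow> \<exists>v. S u v \<and> I y v"
  shows "\<exists>v. (S ^^ m) u v \<and> I y v"
  using assms(1)
proof (induction m arbitrary: y)
  case 0
  then show ?case using assms(2) by auto
next
  case (Suc m)
  then obtain z where "(R ^^ m) x z" "R z y" by auto
  then obtain w where "(S ^^ m) u w" "I z w" using Suc.IH by blast
  moreover obtain v where "S w v" "I y v" using simulate[OF \<open>R z y\<close> \<open>I z w\<close>] by blast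
  ultimately show ?case by auto
qed

lemma block_sizes_singletons: "block_sizes ((\<lambda>i. {i}) ` {..<n}) = singletons n"
proof -
  have "inj_on (\<lambda>i. {i}) {..<n}" by simp
  then have "block_sizes ((\<lambda>i. {i}) ` {..<n}) = image_mset (\<lambda>_. 1) (mset_set {..<n})"
    unfolding block_sizes_def by (simp flip: image_mset_mset_set add: multiset.map_comp comp_def)
  then show ?thesis by (simp add: image_mset_const_eq)
qed

lemma size_run_realizable:
  assumes "(size_step ^^ m) (singletons n) M" "2 \<le> k"
  shows "\<exists>D. (compromise_transition 1 n (\<lambda>_. {0}) k ^^ m) (coalitions ((\<lambda>i. {i}) ` {..<n})) D"
proof -
  let ?I = "\<lambda>M D. \<exists>P. D = coalitions P \<and> partition_on {..<n} P \<and> block_sizes P = M"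
  have "?I (singletons n) (coalitions ((\<lambda>i. {i}) ` {..<n}))"
    using partition_on_singletons block_sizes_singletons by blast
  moreover have "\<exists>D'. compromise_transition 1 n (\<lambda>_. {0}) k D D' \<and> ?I M' D'"
    if "size_step M M'" "?I M D" for M M' D
  proof -
    obtain P where "D = coalitions P" "partition_on {..<n} P" "block_sizes P = M"
      using \<open>?I M D\<close> by blast
    with \<open>size_step M M'\<close> obtain P' where
      "compromise_transition 1 n (\<lambda>_. {0}) k (coalitions P) (coalitions P')"
      "partition_on {..<n} P'" "block_sizes P' = M'"
      using size_step_realizable \<open>2 \<le> k\<close> by blast
    with \<open>D = coalitions P\<close> show ?thesis by blast
  qed
  ultimately obtain D where "(compromise_transition 1 n (\<lambda>_. {0}) k ^^ m) (coalitions ((\<lambda>i. {i}) ` {..<n})) D"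
    using relpowp_simulation[OF assms(1), of ?I] by blast
  then show ?thesis ..
qed

lemma long_size_run: "\<exists>m \<ge> 2 ^ t - 1. (size_step ^^ m) (singletons (t * (t + 2))) (all_ones t)"
proof -
  have "reaches_ge (singletons t + singletons (t * (t + 1))) (singletons t + all_zeros t) 0"
    by (rule reaches_ge_frame[OF build_all_zeros])
  then have "reaches_ge (singletons (t * (t + 2))) (all_zeros t + singletons t) 0"
    by (simp add: replicate_mset_add[symmetric] algebra_simps add.commute)
  from reaches_ge_trans[OF this count_up] show ?thesis
    unfolding reaches_ge_def by auto
qed

lemma half_two_powr_sqrt_le:
  assumes "1 \<le> t"
  shows "1 / 2 * 2 powr (sqrt (real (t * (t + 2))) / 2) \<le> real (2 ^ t - 1 :: nat)"
proof -
  have "real (t * (t + 2)) \<le> (real t + 1)\<^sup>2"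
    by (simp add: power2_eq_square algebra_simps)
  then have "sqrt (real (t * (t + 2))) \<le> real t + 1"
    using real_sqrt_le_mono by fastforce
  then have "sqrt (real (t * (t + 2))) / 2 \<le> real t"
    using assms by simp
  then have "2 powr (sqrt (real (t * (t + 2))) / 2) \<le> 2 ^ t"
    by (metis powr_mono powr_realpow one_le_numeral zero_less_numeral)
  moreover have "(2::real) \<le> 2 ^ t"
    using power_increasing[OF assms, of "2::real"] by simp
  ultimately show ?thesis
    by (simp add: of_nat_diff)
qed

theorem mainTheorem4:
  fixes k :: nat
  assumes "k \<ge> 2"
  shows "\<exists>c::real. c > 0 \<and>
    (\<forall>N::nat. \<exists>n\<ge>N. \<exists>(d::nat) (pos :: nat \<Rightarrow> nat set)
        (f :: nat \<Rightarrow> (nat set \<times> nat set) set) (m::nat).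
       (\<forall>i<n. is_point d (pos i)) \<and>
       coalition_structure d n pos (f 0) \<and>
       (\<forall>j<m. compromise_transition d n pos k (f j) (f (Suc j))) \<and>
       real m \<ge> c * 2 powr (sqrt (real n) / 2))"
proof (intro exI[of _ "1 / 2"] conjI allI)
  fix N :: nat
  define t where "t = Suc N"
  define n where "n = t * (t + 2)"
  obtain m where "2 ^ t - 1 \<le> m" and run: "(size_step ^^ m) (singletons n) (all_ones t)"
    using long_size_run unfolding n_def by blast
  obtain D where "(compromise_transition 1 n (\<lambda>_. {0}) k ^^ m) (coalitions ((\<lambda>i. {i}) ` {..<n})) D"
    using size_run_realizable[OF run assms] by blast
  then obtain f where "f 0 = coalitions ((\<lambda>i. {i}) ` {..<n})"
    and steps: "\<forall>j<m. compromise_transition 1 n (\<lambda>_. {0}) k (f j) (f (Suc j))"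
    by (auto simp: relpowp_fun_conv)
  then have start: "coalition_structure 1 n (\<lambda>_. {0}) (f 0)"
    using coalition_structure_coalitions[OF partition_on_singletons] by simp
  have length: "1 / 2 * 2 powr (sqrt (real n) / 2) \<le> real m"
    using half_two_powr_sqrt_le[of t] \<open>2 ^ t - 1 \<le> m\<close> unfolding n_def t_def by linarith
  have "N \<le> n"
    by (simp add: n_def t_def)
  show "\<exists>n\<ge>N. \<exists>d pos f m. (\<forall>i<n. is_point d (pos i)) \<and> coalition_structure d n pos (f 0) \<and>
      (\<forall>j<m. compromise_transition d n pos k (f j) (f (Suc j))) \<and> 1 / 2 * 2 powr (sqrt (real n) / 2) \<le> real m"
    by (rule exI[of _ n], rule conjI[OF \<open>N \<le> n\<close>],
        rule exI[of _ 1], rule exI[of _ "\<lambda>_. {0}"], rule exI[of _ f], rule exI[of _ m])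
      (use start steps length in \<open>simp add: is_point_def\<close>)
qed simp

end
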